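(* Let $G$ be a Polish group. Then the family of Haar meager subsets of $G$ is a $\sigma$-ideal, i.e. every subset of a Haar meager set is Haar meager and the union of countably many Haar meager sets is Haar meager.
   Context: Let $G$ be a Polish group (not necessarily abelian). A set $A\subseteq G$ is called Haar meager if there exist a Borel set $B\subseteq G$ with $A\subseteq B$, a compact metric space $K$, and a continuous map $f\colon K\to G$ such that $f^{-1}(gBh)$ is meager in $K$ for every $g,h\in G$. *)

theory Defs
  imports "HOL-Analysis.Analysis"
begin

definition nowhere_dense_in :: "'a topology \<Rightarrow> 'a set \<Rightarrow> bool" where
  "nowhere_dense_in X S \<longleftrightarrow> S \<subseteq> topspace X \<and> X interior_of (X closure_of S) = {}"

definition meager_in :: "'a topology \<Rightarrow> 'a set \<Rightarrow> bool" where
  "meager_in X S \<longleftrightarrow>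
     (\<exists>\<F>. countable \<F> \<and> (\<forall>N\<in>\<F>. nowhere_dense_in X N) \<and> S = \<Union>\<F>)"

text \<open>Haar meager sets in a Polish group (written additively, not necessarily abelian).
  The compact metric space K is represented as a nonempty compact subset of the
  Hilbert-cube-containing space nat => real (product topology); every compact
  metric space is homeomorphic to such a set.\<close>

definition haar_meager :: "'g::{polish_space, topological_group_add} set \<Rightarrow> bool" where
  "haar_meager A \<longleftrightarrow>
     (\<exists>B. B \<in> sets borel \<and> A \<subseteq> B \<and>
       (\<exists>(K :: (nat \<Rightarrow> real) set) (f :: (nat \<Rightarrow> real) \<Rightarrow> 'g).
          compact K \<and> K \<noteq> {} \<and> continuous_on K f \<and>
          (\<forall>g h. meager_in (subtopology euclidean K)
                    {x \<in> K. f x \<in> (\<lambda>b. g + b + h) ` B})))"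

end

theory Submission
  imports Defs
begin

text \<open>For a countable
  union, pick Borel sets B_n containing A_n with witnesses f_n on compact K_n. Each witness may be
  replaced by a left translate restricted to a small piece of K_n, so they can be chosen one after
  another such that f_n moves every partial sum f_0(y_0) + ... + f_(n-1)(y_(n-1)) by less than
  2^-n. The ordered infinite sum F(y) = f_0(y_0) + f_1(y_1) + ... then converges uniformly on the
  compact product K of the K_n, so F is continuous. Changing only the n-th coordinate of y changes
  F(y) by a two-sided translation of f_n(y_n), hence every n-section of F^-1(g B_n h) is meager in
  K_n. That preimage has the Baire property, so by the Kuratowski--Ulam theorem it is meager in K,
  and so is the countable union over n.\<close>

section \<open>Meager sets and the Baire property\<close>

lemma nowhere_dense_in_subset:
  "nowhere_dense_in X N \<Longrightarrow> S \<subseteq> N \<Longrightarrow> nowhere_dense_in X S"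
  unfolding nowhere_dense_in_def
  by (metis closure_of_mono interior_of_mono subset_empty subset_trans)

lemma closedin_nowhere_dense_in:
  "closedin X C \<Longrightarrow> X interior_of C = {} \<Longrightarrow> nowhere_dense_in X C"
  unfolding nowhere_dense_in_def by (simp add: closure_of_closedin closedin_subset)

lemma nowhere_dense_in_closure_of_diff:
  assumes "openin X U"
  shows "nowhere_dense_in X (X closure_of U - U)"
proof (rule closedin_nowhere_dense_in)
  show "closedin X (X closure_of U - U)"
    using assms by (simp add: closedin_diff)
  define W where "W = X interior_of (X closure_of U - U)"
  have "W \<subseteq> X closure_of U - U"
    unfolding W_def by (rule interior_of_subset)
  moreover have "W \<inter> X closure_of U = {}"
    using calculation openin_Int_closure_of_eq_empty[of X W U] by (auto simp: W_def)
  ultimately show "X interior_of (X closure_of U - U) = {}"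
    unfolding W_def by blast
qed

lemma nowhere_dense_in_imp_meager_in: "nowhere_dense_in X N \<Longrightarrow> meager_in X N"
  unfolding meager_in_def by (rule exI[of _ "{N}"]) auto

lemma meager_in_empty [simp]: "meager_in X {}"
  unfolding meager_in_def by (rule exI[of _ "{}"]) auto

lemma meager_in_subset:
  assumes "meager_in X M" "S \<subseteq> M"
  shows "meager_in X S"
proof -
  obtain \<F> where "countable \<F>" "\<forall>N\<in>\<F>. nowhere_dense_in X N" "M = \<Union>\<F>"
    using assms(1) unfolding meager_in_def by blast
  then show ?thesis
    unfolding meager_in_def using assms(2)
    by (intro exI[of _ "(\<lambda>N. N \<inter> S) ` \<F>"]) (auto intro: nowhere_dense_in_subset)
qed

lemma meager_in_Union:
  assumes "countable \<M>" "\<And>M. M \<in> \<M> \<Longrightarrow> meager_in X M"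
  shows "meager_in X (\<Union>\<M>)"
proof -
  obtain \<F> where \<F>: "\<And>M. M \<in> \<M> \<Longrightarrow>
      countable (\<F> M) \<and> (\<forall>N\<in>\<F> M. nowhere_dense_in X N) \<and> M = \<Union>(\<F> M)"
    using assms(2) unfolding meager_in_def by metis
  have "\<Union>\<M> = (\<Union>M\<in>\<M>. \<Union>(\<F> M))"
    using \<F> by simp
  also have "\<dots> = \<Union>(\<Union>(\<F> ` \<M>))"
    by auto
  finally show ?thesis
    unfolding meager_in_def using \<F> assms(1) by (intro exI[of _ "\<Union>(\<F> ` \<M>)"]) auto
qed

lemma meager_in_UN:
  assumes "\<And>n::nat. meager_in X (M n)"
  shows "meager_in X (\<Union>n. M n)"
  using assms by (intro meager_in_Union) auto

lemma meager_in_Un: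
  assumes "meager_in X M" "meager_in X M'"
  shows "meager_in X (M \<union> M')"
  using meager_in_Union[of "{M, M'}" X] assms by auto

lemma meager_in_closed_cover:
  assumes "meager_in X M"
  obtains \<C> where "countable \<C>" "\<And>C. C \<in> \<C> \<Longrightarrow> closedin X C \<and> X interior_of C = {}"
    "M \<subseteq> \<Union>\<C>"
proof -
  obtain \<F> where \<F>: "countable \<F>" "\<forall>N\<in>\<F>. nowhere_dense_in X N" "M = \<Union>\<F>"
    using assms unfolding meager_in_def by blast
  show thesis
  proof (rule that)
    show "countable ((\<lambda>N. X closure_of N) ` \<F>)"
      using \<F>(1) by blast
    show "closedin X C \<and> X interior_of C = {}" if "C \<in> (\<lambda>N. X closure_of N) ` \<F>" for C
      using that \<F>(2) unfolding nowhere_dense_in_def by auto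
    show "M \<subseteq> \<Union>((\<lambda>N. X closure_of N) ` \<F>)"
      using \<F>(2,3) closure_of_subset unfolding nowhere_dense_in_def by fastforce
  qed
qed

lemma Baire_category_compact:
  fixes K :: "'a::metric_space set"
  assumes "compact K" "countable \<G>"
    and "\<And>T. T \<in> \<G> \<Longrightarrow> closedin (top_of_set K) T \<and> top_of_set K interior_of T = {}"
  shows "top_of_set K interior_of \<Union>\<G> = {}"
proof (rule Baire_category_alt)
  have "locally_compact_space (top_of_set K)"
    using assms(1) by (simp add: compact_space_subtopology compact_imp_locally_compact_space)
  moreover have "regular_space (top_of_set K)"
    by (intro metrizable_imp_regular_space metrizable_space_subtopology metrizable_space_euclidean)
  ultimately show "completely_metrizable_space (top_of_set K) \<or>
      locally_compact_space (top_of_set K) \<and> regular_space (top_of_set K)"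
    by blast
qed (use assms in auto)

lemma meager_in_compact_openin_eq_empty:
  fixes K :: "'a::metric_space set"
  assumes "compact K" "openin (top_of_set K) U" "meager_in (top_of_set K) M" "U \<subseteq> M"
  shows "U = {}"
proof -
  obtain \<C> where \<C>: "countable \<C>"
    "\<And>C. C \<in> \<C> \<Longrightarrow> closedin (top_of_set K) C \<and> top_of_set K interior_of C = {}" "M \<subseteq> \<Union>\<C>"
    using meager_in_closed_cover[OF assms(3)] by blast
  have "U \<subseteq> top_of_set K interior_of \<Union>\<C>"
    using assms(2,4) \<C>(3) by (intro interior_of_maximal) auto
  then show ?thesis
    using Baire_category_compact[OF assms(1) \<C>(1,2)] by blast
qed

definition baire_property_in :: "'a topology \<Rightarrow> 'a set \<Rightarrow> bool" where
  "baire_property_in X S \<longleftrightarrow>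
     S \<subseteq> topspace X \<and> (\<exists>U. openin X U \<and> meager_in X (sym_diff S U))"

lemma openin_imp_baire_property_in: "openin X S \<Longrightarrow> baire_property_in X S"
  unfolding baire_property_in_def using openin_subset by fastforce

lemma baire_property_in_complement:
  assumes "baire_property_in X S"
  shows "baire_property_in X (topspace X - S)"
proof -
  obtain U where U: "openin X U" "meager_in X (sym_diff S U)" and S: "S \<subseteq> topspace X"
    using assms unfolding baire_property_in_def by blast
  define V where "V = topspace X - X closure_of U"
  have "sym_diff (topspace X - S) V \<subseteq> sym_diff S U \<union> (X closure_of U - U)"
    unfolding V_def using S closure_of_subset[OF openin_subset[OF U(1)]] by auto
  moreover have "meager_in X (sym_diff S U \<union> (X closure_of U - U))"
    using U by (intro meager_in_Un[OF U(2)] nowhere_dense_in_imp_meager_in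
        nowhere_dense_in_closure_of_diff)
  moreover have "openin X V"
    unfolding V_def by (simp add: openin_diff)
  ultimately show ?thesis
    unfolding baire_property_in_def by (blast intro: meager_in_subset)
qed

lemma baire_property_in_UN:
  assumes "\<And>n::nat. baire_property_in X (S n)"
  shows "baire_property_in X (\<Union>n. S n)"
proof -
  obtain U where U: "\<And>n. openin X (U n)" "\<And>n. meager_in X (sym_diff (S n) (U n))"
    using assms unfolding baire_property_in_def by metis
  have "sym_diff (\<Union>n. S n) (\<Union>n. U n) \<subseteq> (\<Union>n. sym_diff (S n) (U n))"
    by blast
  then have "meager_in X (sym_diff (\<Union>n. S n) (\<Union>n. U n))"
    using meager_in_UN[OF U(2)] by (rule meager_in_subset[rotated])
  moreover have "openin X (\<Union>n. U n)"
    using U(1) by blast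
  moreover have "(\<Union>n. S n) \<subseteq> topspace X"
    using assms unfolding baire_property_in_def by blast
  ultimately show ?thesis
    unfolding baire_property_in_def by blast
qed

lemma baire_property_in_vimage_borel:
  fixes f :: "'a::topological_space \<Rightarrow> 'b::topological_space"
  assumes "continuous_on K f" "S \<in> sets borel"
  shows "baire_property_in (top_of_set K) {x\<in>K. f x \<in> S}"
proof -
  have "S \<in> sigma_sets UNIV {S. open S}"
    using assms(2) by (simp add: sets_borel)
  then show ?thesis
  proof (induction rule: sigma_sets.induct)
    case (Basic S)
    then have "openin (top_of_set K) {x\<in>K. f x \<in> S}"
      using continuous_openin_preimage_gen[OF assms(1)] by (auto simp: vimage_def Int_def)
    then show ?case
      by (rule openin_imp_baire_property_in)
  next
    case Empty
    show ?case
      using openin_imp_baire_property_in[of "top_of_set K" "{}"] by simp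
  next
    case (Compl S)
    have "{x\<in>K. f x \<in> UNIV - S} = topspace (top_of_set K) - {x\<in>K. f x \<in> S}"
      by auto
    then show ?case
      using baire_property_in_complement[OF Compl.IH] by simp
  next
    case (Union S)
    have "{x\<in>K. f x \<in> \<Union>(range S)} = (\<Union>n. {x\<in>K. f x \<in> S n})"
      by auto
    then show ?case
      using baire_property_in_UN[OF Union.IH] by simp
  qed
qed

lemma nowhere_dense_in_closure_restrict:
  fixes K :: "'a::topological_space set"
  assumes K: "closed K" and U: "openin (top_of_set K) U"
    and N: "nowhere_dense_in (top_of_set K) N"
  shows "nowhere_dense_in (top_of_set (closure U)) (U \<inter> N)"
proof -
  have "U \<subseteq> K" "N \<subseteq> K"
    using openin_subset[OF U] N unfolding nowhere_dense_in_def by auto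
  then have int_N: "top_of_set K interior_of (K \<inter> closure N) = {}"
    using N by (simp add: nowhere_dense_in_def closure_of_subtopology Int_absorb1)
  obtain T where T: "open T" "U = K \<inter> T"
    using U by (auto simp: openin_open)
  have "closure U \<inter> (U \<inter> N) = U \<inter> N"
    using closure_subset by blast
  then have cl: "top_of_set (closure U) closure_of (U \<inter> N) = closure U \<inter> closure (U \<inter> N)"
    by (simp add: closure_of_subtopology)
  have "W = {}" if W: "openin (top_of_set (closure U)) W" "W \<subseteq> closure (U \<inter> N)" for W
  proof -
    obtain O' where O': "open O'" "W = closure U \<inter> O'"
      using W(1) by (auto simp: openin_open)
    have "openin (top_of_set K) (O' \<inter> U)"
      unfolding openin_open using T O' by (intro exI[of _ "O' \<inter> T"]) auto
    moreover have "O' \<inter> U \<subseteq> K \<inter> closure N"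
      using O' W(2) closure_subset[of U] closure_mono[of "U \<inter> N" N] \<open>U \<subseteq> K\<close> by blast
    ultimately have "O' \<inter> U \<subseteq> top_of_set K interior_of (K \<inter> closure N)"
      by (simp add: interior_of_maximal)
    then have "O' \<inter> U = {}"
      using int_N by blast
    then show "W = {}"
      using O' open_Int_closure_eq_empty by blast
  qed
  then have "top_of_set (closure U) interior_of (closure U \<inter> closure (U \<inter> N)) = {}"
    by (metis interior_of_subset le_inf_iff openin_interior_of)
  then show ?thesis
    unfolding nowhere_dense_in_def cl using closure_subset by auto
qed

lemma meager_in_closure_restrict:
  fixes K :: "'a::topological_space set"
  assumes K: "closed K" and U: "openin (top_of_set K) U" and M: "meager_in (top_of_set K) M"
  shows "meager_in (top_of_set (closure U)) (closure U \<inter> M)"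
proof -
  obtain \<F> where \<F>: "countable \<F>" "\<forall>N\<in>\<F>. nowhere_dense_in (top_of_set K) N" "M = \<Union>\<F>"
    using M unfolding meager_in_def by blast
  obtain T where T: "open T" "U = K \<inter> T"
    using U by (auto simp: openin_open)
  have "closure U \<subseteq> K"
    using openin_subset[OF U] K by (simp add: closure_minimal)
  then have "U = closure U \<inter> T"
    using T(2) closure_subset[of U] by blast
  then have "openin (top_of_set (closure U)) U"
    unfolding openin_open using T(1) by blast
  then have "nowhere_dense_in (top_of_set (closure U)) (closure U - U)"
    using nowhere_dense_in_closure_of_diff[of "top_of_set (closure U)" U] closure_subset[of U]
    by (simp add: closure_of_subtopology Int_absorb1)
  then have "meager_in (top_of_set (closure U)) (\<Union>(insert (closure U - U) ((\<lambda>N. U \<inter> N) ` \<F>)))"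
    unfolding meager_in_def using \<F>(1,2) nowhere_dense_in_closure_restrict[OF K U]
    by (intro exI[of _ "insert (closure U - U) ((\<lambda>N. U \<inter> N) ` \<F>)"]) auto
  then show ?thesis
    by (rule meager_in_subset) (auto simp: \<F>(3))
qed

definition haar_meager_witness ::
    "'g::topological_group_add set \<Rightarrow> (nat \<Rightarrow> real) set \<Rightarrow> ((nat \<Rightarrow> real) \<Rightarrow> 'g) \<Rightarrow> bool" where
  "haar_meager_witness B K f \<longleftrightarrow> compact K \<and> K \<noteq> {} \<and> continuous_on K f \<and>
     (\<forall>g h. meager_in (top_of_set K) {x \<in> K. f x \<in> (\<lambda>b. g + b + h) ` B})"

lemma haar_meager_iff_witness:
  "haar_meager A \<longleftrightarrow> (\<exists>B \<in> sets borel. A \<subseteq> B \<and> (\<exists>K f. haar_meager_witness B K f))"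
  unfolding haar_meager_def haar_meager_witness_def by blast

lemma mem_translate_image_iff:
  fixes x g h :: "'g::group_add"
  shows "x \<in> (\<lambda>b. g + b + h) ` B \<longleftrightarrow> -g + x + -h \<in> B"
proof -
  have "x = g + b + h \<longleftrightarrow> -g + x + -h = b" for b
    by (auto simp: add.assoc)
  then show ?thesis
    by (simp only: image_iff) simp
qed

lemma mem_translate_image_left_iff:
  fixes a x g h :: "'g::group_add"
  shows "-a + x \<in> (\<lambda>b. g + b + h) ` B \<longleftrightarrow> x \<in> (\<lambda>b. (a + g) + b + h) ` B"
  unfolding mem_translate_image_iff
  by (simp add: minus_add add.assoc diff_conv_add_uminus del: add_uminus_conv_diff)

lemma mem_translate_image_middle_iff:
  fixes p w q g h :: "'g::group_add"
  shows "p + w + q \<in> (\<lambda>b. g + b + h) ` B \<longleftrightarrow> w \<in> (\<lambda>b. (-p + g) + b + (h + -q)) ` B"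
  unfolding mem_translate_image_iff
  by (simp add: minus_add add.assoc diff_conv_add_uminus del: add_uminus_conv_diff)

lemma haar_meager_witness_into_nhds:
  fixes B :: "'g::{metric_space, topological_group_add} set"
  assumes w: "haar_meager_witness B K f" and V: "open V" "0 \<in> V"
  obtains K' f' where "haar_meager_witness B K' f'" "f' ` K' \<subseteq> V"
proof -
  have K: "compact K" "K \<noteq> {}" "continuous_on K f"
    and meager: "\<And>g h. meager_in (top_of_set K) {x \<in> K. f x \<in> (\<lambda>b. g + b + h) ` B}"
    using w unfolding haar_meager_witness_def by auto
  obtain x0 where x0: "x0 \<in> K"
    using K(2) by blast
  define f' where "f' = (\<lambda>x. - f x0 + f x)"
  have cont: "continuous_on K f'"
    unfolding f'_def by (intro continuous_intros K(3))
  obtain r where r: "r > 0" "cball 0 r \<subseteq> V"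
    using V open_contains_cball by blast
  define U where "U = K \<inter> f' -` ball 0 r"
  have U: "openin (top_of_set K) U"
    unfolding U_def by (rule continuous_openin_preimage_gen[OF cont open_ball])
  have "closed K"
    using K(1) by (rule compact_imp_closed)
  then have clU_K: "closure U \<subseteq> K"
    by (simp add: closure_minimal U_def)
  show thesis
  proof (rule that)
    have "x0 \<in> U"
      using x0 r unfolding U_def f'_def by auto
    then have "closure U \<noteq> {}"
      using closure_subset by blast
    moreover have "compact (closure U)"
      using compact_Int_closed[OF K(1), of "closure U"] clU_K by (simp add: Int_absorb1)
    moreover have "continuous_on (closure U) f'"
      using cont clU_K by (rule continuous_on_subset)
    moreover have "meager_in (top_of_set (closure U)) {x \<in> closure U. f' x \<in> (\<lambda>b. g + b + h) ` B}"
      for g h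
    proof -
      have "{x \<in> closure U. f' x \<in> (\<lambda>b. g + b + h) ` B} =
          closure U \<inter> {x \<in> K. f x \<in> (\<lambda>b. (f x0 + g) + b + h) ` B}"
        using clU_K unfolding f'_def mem_translate_image_left_iff by blast
      then show ?thesis
        using meager_in_closure_restrict[OF \<open>closed K\<close> U meager] by simp
    qed
    ultimately show "haar_meager_witness B (closure U) f'"
      unfolding haar_meager_witness_def by blast
    have "f' ` U \<subseteq> cball 0 r"
      unfolding U_def by auto
    then show "f' ` closure U \<subseteq> V"
      using image_closure_subset[OF \<open>continuous_on (closure U) f'\<close> closed_cball] r(2) by blast
  qed
qed

lemma compact_translation_nhds:
  fixes C :: "'g::{metric_space, topological_group_add} set"
  assumes "compact C" "e > 0"
  obtains V where "open V" "0 \<in> V" "\<And>v a. v \<in> V \<Longrightarrow> a \<in> C \<Longrightarrow> dist (a + v) a < e"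
proof -
  have "open {p :: 'g \<times> 'g. dist (snd p + fst p) (snd p) < e}"
    by (intro open_Collect_less continuous_intros)
  moreover have "{0} \<times> C \<subseteq> {p. dist (snd p + fst p) (snd p) < e}"
    using assms(2) by auto
  ultimately have "\<exists>V. 0 \<in> V \<and> open V \<and> V \<times> C \<subseteq> {p. dist (snd p + fst p) (snd p) < e}"
    by (rule Elementary_Topology.tube_lemma[OF assms(1)])
  then obtain V where V: "0 \<in> V" "open V" "V \<times> C \<subseteq> {p. dist (snd p + fst p) (snd p) < e}"
    by blast
  show thesis
  proof (rule that[OF V(2,1)])
    show "dist (a + v) a < e" if "v \<in> V" "a \<in> C" for v a
      using that V(3) by auto
  qed
qed

lemma haar_meager_witness_small_displacement:
  fixes B :: "'g::{metric_space, topological_group_add} set"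
  assumes "haar_meager_witness B K f" "compact C" "e > 0"
  obtains K' f' where "haar_meager_witness B K' f'"
    "\<And>a x. a \<in> C \<Longrightarrow> x \<in> K' \<Longrightarrow> dist (a + f' x) a < e"
proof -
  obtain V where V: "open V" "0 \<in> V" "\<And>v a. v \<in> V \<Longrightarrow> a \<in> C \<Longrightarrow> dist (a + v) a < e"
    using compact_translation_nhds[OF assms(2,3)] by blast
  obtain K' f' where K': "haar_meager_witness B K' f'" "f' ` K' \<subseteq> V"
    using haar_meager_witness_into_nhds[OF assms(1) V(1,2)] .
  show thesis
  proof (rule that[OF K'(1)])
    show "dist (a + f' x) a < e" if "a \<in> C" "x \<in> K'" for a x
      using that K'(2) V(3) by blast
  qed
qed

section \<open>Countable products of compact sets\<close>

text \<open>A sequence of points of nat \<Rightarrow> real is coded as a single such point via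
  prod_encode, block n picking out the n-th member; block_product Ks is the product of the Ks n.\<close>

definition block :: "nat \<Rightarrow> (nat \<Rightarrow> real) \<Rightarrow> (nat \<Rightarrow> real)" where
  "block n y = (\<lambda>i. y (prod_encode (n, i)))"

definition block_update :: "nat \<Rightarrow> (nat \<Rightarrow> real) \<Rightarrow> (nat \<Rightarrow> real) \<Rightarrow> (nat \<Rightarrow> real)" where
  "block_update n y z = (\<lambda>m. if fst (prod_decode m) = n then z (snd (prod_decode m)) else y m)"

definition block_product :: "(nat \<Rightarrow> (nat \<Rightarrow> real) set) \<Rightarrow> (nat \<Rightarrow> real) set" where
  "block_product Ks = {y. \<forall>n. block n y \<in> Ks n}"

lemma block_prod_decode [simp]: "block (fst (prod_decode m)) y (snd (prod_decode m)) = y m"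
  unfolding block_def by simp

lemma block_block_update [simp]:
  "block m (block_update n y z) = (if m = n then z else block m y)"
  unfolding block_def block_update_def by simp

lemma block_update_block [simp]: "block_update n y (block n y) = y"
proof
  fix m
  show "block_update n y (block n y) m = y m"
    using block_prod_decode[of m y] unfolding block_update_def by auto
qed

lemma block_update_block_update [simp]:
  "block_update n (block_update n y z) z' = block_update n y z'"
  unfolding block_update_def by auto

lemma block_in_block_product: "y \<in> block_product Ks \<Longrightarrow> block n y \<in> Ks n"
  unfolding block_product_def by blast

lemma block_update_in_block_product:
  "y \<in> block_product Ks \<Longrightarrow> z \<in> Ks n \<Longrightarrow> block_update n y z \<in> block_product Ks"
  unfolding block_product_def by simp

lemma continuous_on_block: "continuous_on S (block n)"
  unfolding block_def
  by (intro continuous_on_coordinatewise_then_product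
      continuous_on_product_then_coordinatewise[OF continuous_on_id])

lemma continuous_on_block_update_left: "continuous_on S (\<lambda>y. block_update n y z)"
  unfolding block_update_def
proof (rule continuous_on_coordinatewise_then_product)
  fix i
  show "continuous_on S (\<lambda>x. if fst (prod_decode i) = n then z (snd (prod_decode i)) else x i)"
    by (cases "fst (prod_decode i) = n")
      (simp_all add: continuous_on_product_then_coordinatewise[OF continuous_on_id])
qed

lemma continuous_on_block_update_right: "continuous_on S (\<lambda>z. block_update n y z)"
  unfolding block_update_def
proof (rule continuous_on_coordinatewise_then_product)
  fix i
  show "continuous_on S (\<lambda>x. if fst (prod_decode i) = n then x (snd (prod_decode i)) else y i)"
    by (cases "fst (prod_decode i) = n")
      (simp_all add: continuous_on_product_then_coordinatewise[OF continuous_on_id])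
qed

lemma block_product_nonempty:
  assumes "\<And>n. Ks n \<noteq> {}"
  shows "block_product Ks \<noteq> {}"
proof -
  have "\<forall>n. \<exists>x. x \<in> Ks n"
    using assms by blast
  then obtain p where p: "\<And>n. p n \<in> Ks n"
    by metis
  define y where "y = (\<lambda>m. p (fst (prod_decode m)) (snd (prod_decode m)))"
  have "block n y = p n" for n
    unfolding y_def block_def by simp
  then have "y \<in> block_product Ks"
    unfolding block_product_def using p by simp
  then show ?thesis
    by blast
qed

lemma compact_block_product:
  assumes "\<And>n. compact (Ks n)"
  shows "compact (block_product Ks)"
proof -
  define R where "R m = (\<lambda>x. x (snd (prod_decode m))) ` Ks (fst (prod_decode m))" for m
  have "compact (R m)" for m
    unfolding R_def
    by (rule compact_continuous_image[OF continuous_on_product_then_coordinatewise[OF continuous_on_id] assms])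
  then have "compactin (product_topology (\<lambda>_. euclidean) UNIV) (PiE UNIV R)"
    by (simp add: compactin_PiE)
  then have "compact (PiE UNIV R)"
    by (simp add: euclidean_product_topology)
  moreover have "closed (block_product Ks)"
  proof -
    have "block_product Ks = (\<Inter>n. block n -` Ks n)"
      unfolding block_product_def by auto
    moreover have "closed (block n -` Ks n)" for n
      using continuous_on_block[of UNIV n] compact_imp_closed[OF assms[of n]]
      by (simp add: closed_vimage)
    ultimately show ?thesis
      by auto
  qed
  moreover have "block_product Ks \<subseteq> PiE UNIV R"
  proof
    fix y assume y: "y \<in> block_product Ks"
    show "y \<in> PiE UNIV R"
    proof (rule PiE_I)
      fix m
      have "block (fst (prod_decode m)) y \<in> Ks (fst (prod_decode m))"
        using y by (rule block_in_block_product)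
      then show "y m \<in> R m"
        unfolding R_def by (rule rev_image_eqI) simp
    qed simp
  qed
  ultimately show ?thesis
    using compact_Int_closed[of "PiE UNIV R" "block_product Ks"] by (simp add: Int_absorb1)
qed

section \<open>A Kuratowski--Ulam theorem\<close>

lemma closedin_full_sections:
  assumes N: "closedin (top_of_set (block_product Ks)) N" and V: "Ks n \<inter> V \<noteq> {}"
  shows "closedin (top_of_set (block_product Ks))
      {y \<in> block_product Ks. \<forall>z \<in> Ks n \<inter> V. block_update n y z \<in> N}"
proof -
  have "closedin (top_of_set (block_product Ks)) {y \<in> block_product Ks. block_update n y z \<in> N}"
    if "z \<in> Ks n" for z
  proof -
    have "continuous_map (top_of_set (block_product Ks)) (top_of_set (block_product Ks))
        (\<lambda>y. block_update n y z)"
      using that by (simp add: continuous_on_block_update_left block_update_in_block_product)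
    from closedin_continuous_map_preimage[OF this N] show ?thesis
      by simp
  qed
  then have "closedin (top_of_set (block_product Ks))
      (\<Inter>z \<in> Ks n \<inter> V. {y \<in> block_product Ks. block_update n y z \<in> N})"
    using V by (intro closedin_Inter) auto
  moreover have "(\<Inter>z \<in> Ks n \<inter> V. {y \<in> block_product Ks. block_update n y z \<in> N}) =
      {y \<in> block_product Ks. \<forall>z \<in> Ks n \<inter> V. block_update n y z \<in> N}"
    using V by blast
  ultimately show ?thesis
    by simp
qed

lemma interior_of_full_sections_eq_empty:
  assumes N: "top_of_set (block_product Ks) interior_of N = {}"
    and V: "open V" "Ks n \<inter> V \<noteq> {}"
  shows "top_of_set (block_product Ks) interior_of
      {y \<in> block_product Ks. \<forall>z \<in> Ks n \<inter> V. block_update n y z \<in> N} = {}"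
    (is "top_of_set ?K interior_of ?S = {}")
proof (rule ccontr)
  define W where "W = top_of_set ?K interior_of ?S"
  assume "W \<noteq> {}"
  then obtain y where y: "y \<in> W" "y \<in> ?K"
    using interior_of_subset[of "top_of_set ?K" ?S] unfolding W_def by blast
  obtain z0 where z0: "z0 \<in> Ks n" "z0 \<in> V"
    using V(2) by blast
  define Q where "Q = {w \<in> ?K. block_update n w (block n y) \<in> W \<and> block n w \<in> V}"
  \<comment> \<open>Giving a point of Q the n-th block of y lands in W; restoring its own block shows Q \<subseteq> N.\<close>
  have "openin (top_of_set ?K) {w \<in> ?K. block_update n w (block n y) \<in> W}"
    using openin_continuous_map_preimage[of "top_of_set ?K" "top_of_set ?K"
        "\<lambda>w. block_update n w (block n y)" W] y(2)
    by (simp add: W_def continuous_on_block_update_left block_update_in_block_product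
        block_in_block_product)
  moreover have "openin (top_of_set ?K) {w \<in> ?K. block n w \<in> V}"
    using continuous_openin_preimage_gen[OF continuous_on_block V(1), of ?K n]
    by (simp add: vimage_def Int_def)
  moreover have "Q = {w \<in> ?K. block_update n w (block n y) \<in> W} \<inter> {w \<in> ?K. block n w \<in> V}"
    unfolding Q_def by blast
  ultimately have "openin (top_of_set ?K) Q"
    by (simp add: openin_Int)
  moreover have "Q \<subseteq> N"
  proof
    fix w assume w: "w \<in> Q"
    then have "block_update n w (block n y) \<in> ?S" "block n w \<in> Ks n \<inter> V"
      using interior_of_subset[of "top_of_set ?K" ?S] block_in_block_product
      unfolding Q_def W_def by blast+
    then have "block_update n (block_update n w (block n y)) (block n w) \<in> N"
      by blast
    then show "w \<in> N"
      by simp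
  qed
  ultimately have "Q \<subseteq> top_of_set ?K interior_of N"
    by (simp add: interior_of_maximal)
  moreover have "block_update n y z0 \<in> Q"
    using y z0 unfolding Q_def by (simp add: block_update_in_block_product)
  ultimately show False
    using N by blast
qed

lemma nowhere_dense_in_section:
  assumes N: "closedin (top_of_set (block_product Ks)) N" and y: "y \<in> block_product Ks"
    and avoid: "\<And>V. open V \<Longrightarrow> Ks n \<inter> V \<noteq> {} \<Longrightarrow> \<exists>z \<in> Ks n \<inter> V. block_update n y z \<notin> N"
  shows "nowhere_dense_in (top_of_set (Ks n)) {z \<in> Ks n. block_update n y z \<in> N}"
    (is "nowhere_dense_in _ ?S")
proof (rule closedin_nowhere_dense_in)
  have "continuous_map (top_of_set (Ks n)) (top_of_set (block_product Ks)) (\<lambda>z. block_update n y z)"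
    using y by (simp add: continuous_on_block_update_right block_update_in_block_product)
  from closedin_continuous_map_preimage[OF this N]
  show "closedin (top_of_set (Ks n)) ?S"
    by simp
  have "openin (top_of_set (Ks n)) (top_of_set (Ks n) interior_of ?S)"
    by simp
  then obtain W where W: "open W" "top_of_set (Ks n) interior_of ?S = Ks n \<inter> W"
    by (meson openin_open)
  moreover have "Ks n \<inter> W \<subseteq> ?S"
    using interior_of_subset[of "top_of_set (Ks n)" ?S] W(2) by simp
  ultimately show "top_of_set (Ks n) interior_of ?S = {}"
    using avoid[OF W(1)] by blast
qed

lemma nowhere_dense_sections_off_meager:
  assumes N: "closedin (top_of_set (block_product Ks)) N"
    "top_of_set (block_product Ks) interior_of N = {}"
  shows "\<exists>Z. meager_in (top_of_set (block_product Ks)) Z \<and>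
    (\<forall>y \<in> block_product Ks - Z.
       nowhere_dense_in (top_of_set (Ks n)) {z \<in> Ks n. block_update n y z \<in> N})"
proof -
  obtain \<B> :: "(nat \<Rightarrow> real) set set" where \<B>: "countable \<B>" "\<And>V. V \<in> \<B> \<Longrightarrow> open V"
    "\<And>S. open S \<Longrightarrow> \<exists>\<U>. \<U> \<subseteq> \<B> \<and> S = \<Union>\<U>"
    by (rule univ_second_countable) blast
  define F where "F V = {y \<in> block_product Ks. \<forall>z \<in> Ks n \<inter> V. block_update n y z \<in> N}" for V
  define \<Z> where "\<Z> = F ` {V \<in> \<B>. Ks n \<inter> V \<noteq> {}}"
  have "nowhere_dense_in (top_of_set (block_product Ks)) (F V)"
    if "V \<in> \<B>" "Ks n \<inter> V \<noteq> {}" for V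
    unfolding F_def using that \<B>(2)
    by (intro closedin_nowhere_dense_in closedin_full_sections[OF N(1)]
        interior_of_full_sections_eq_empty[OF N(2)]) auto
  moreover have "countable \<Z>"
    unfolding \<Z>_def using \<B>(1) by simp
  ultimately have "meager_in (top_of_set (block_product Ks)) (\<Union>\<Z>)"
    unfolding meager_in_def \<Z>_def by blast
  moreover have "nowhere_dense_in (top_of_set (Ks n)) {z \<in> Ks n. block_update n y z \<in> N}"
    if y: "y \<in> block_product Ks - \<Union>\<Z>" for y
  proof (rule nowhere_dense_in_section[OF N(1)])
    fix W assume "open W" "Ks n \<inter> W \<noteq> {}"
    then obtain z \<U> where "z \<in> Ks n \<inter> W" "\<U> \<subseteq> \<B>" "W = \<Union>\<U>"
      using \<B>(3) by blast
    then obtain V where "V \<in> \<B>" "z \<in> Ks n \<inter> V" "V \<subseteq> W"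
      by blast
    then have "y \<notin> F V"
      using y unfolding \<Z>_def by blast
    then show "\<exists>z \<in> Ks n \<inter> W. block_update n y z \<notin> N"
      using y \<open>V \<subseteq> W\<close> unfolding F_def by blast
  qed (use y in blast)
  ultimately show ?thesis
    by blast
qed

lemma meager_sections_off_meager:
  assumes M: "meager_in (top_of_set (block_product Ks)) M"
  shows "\<exists>Z. meager_in (top_of_set (block_product Ks)) Z \<and>
    (\<forall>y \<in> block_product Ks - Z.
       meager_in (top_of_set (Ks n)) {z \<in> Ks n. block_update n y z \<in> M})"
proof -
  obtain \<C> where \<C>: "countable \<C>"
    "\<And>C. C \<in> \<C> \<Longrightarrow> closedin (top_of_set (block_product Ks)) C \<and>
       top_of_set (block_product Ks) interior_of C = {}" "M \<subseteq> \<Union>\<C>"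
    using meager_in_closed_cover[OF M] by blast
  have "\<forall>C \<in> \<C>. \<exists>Z. meager_in (top_of_set (block_product Ks)) Z \<and>
      (\<forall>y \<in> block_product Ks - Z.
         nowhere_dense_in (top_of_set (Ks n)) {z \<in> Ks n. block_update n y z \<in> C})"
    using \<C>(2) nowhere_dense_sections_off_meager by blast
  then obtain Z where Z: "\<forall>C \<in> \<C>. meager_in (top_of_set (block_product Ks)) (Z C) \<and>
      (\<forall>y \<in> block_product Ks - Z C.
         nowhere_dense_in (top_of_set (Ks n)) {z \<in> Ks n. block_update n y z \<in> C})"
    by (auto dest: bchoice)
  have "meager_in (top_of_set (Ks n)) {z \<in> Ks n. block_update n y z \<in> M}"
    if "y \<in> block_product Ks - \<Union>(Z ` \<C>)" for y
  proof -
    have "meager_in (top_of_set (Ks n)) (\<Union>C \<in> \<C>. {z \<in> Ks n. block_update n y z \<in> C})"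
      using that \<C>(1) Z by (intro meager_in_Union nowhere_dense_in_imp_meager_in) auto
    then show ?thesis
      by (rule meager_in_subset) (use \<C>(3) in blast)
  qed
  moreover have "meager_in (top_of_set (block_product Ks)) (\<Union>(Z ` \<C>))"
    using \<C>(1) Z by (intro meager_in_Union) auto
  ultimately show ?thesis
    by blast
qed

lemma Kuratowski_Ulam_block_product:
  assumes "compact (Ks n)"
    and E: "baire_property_in (top_of_set (block_product Ks)) E"
    and sections: "\<And>y. y \<in> block_product Ks \<Longrightarrow>
       meager_in (top_of_set (Ks n)) {z \<in> Ks n. block_update n y z \<in> E}"
  shows "meager_in (top_of_set (block_product Ks)) E"
proof -
  obtain U where U: "openin (top_of_set (block_product Ks)) U"
    "meager_in (top_of_set (block_product Ks)) (sym_diff E U)"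
    using E unfolding baire_property_in_def by blast
  obtain Z where Z: "meager_in (top_of_set (block_product Ks)) Z"
    "\<And>y. y \<in> block_product Ks - Z \<Longrightarrow>
       meager_in (top_of_set (Ks n)) {z \<in> Ks n. block_update n y z \<in> sym_diff E U}"
    using meager_sections_off_meager[OF U(2), where n = n] by blast
  have "U \<subseteq> Z"
  proof
    fix y assume "y \<in> U"
    \<comment> \<open>Otherwise the n-section of U at y would be a nonempty open set inside a meager set.\<close>
    show "y \<in> Z"
    proof (rule ccontr)
      assume "y \<notin> Z"
      have y: "y \<in> block_product Ks"
        using openin_subset[OF U(1)] \<open>y \<in> U\<close> by auto
      let ?Uy = "{z \<in> Ks n. block_update n y z \<in> U}"
      have "continuous_map (top_of_set (Ks n)) (top_of_set (block_product Ks))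
          (\<lambda>z. block_update n y z)"
        using y by (simp add: continuous_on_block_update_right block_update_in_block_product)
      from openin_continuous_map_preimage[OF this U(1)]
      have "openin (top_of_set (Ks n)) ?Uy"
        by simp
      moreover have "meager_in (top_of_set (Ks n))
          ({z \<in> Ks n. block_update n y z \<in> E} \<union>
           {z \<in> Ks n. block_update n y z \<in> sym_diff E U})"
        using sections[OF y] Z(2) y \<open>y \<notin> Z\<close> by (intro meager_in_Un) auto
      ultimately have "?Uy = {}"
        by (rule meager_in_compact_openin_eq_empty[OF assms(1)]) auto
      moreover have "block n y \<in> ?Uy"
        using y \<open>y \<in> U\<close> by (simp add: block_in_block_product)
      ultimately show False
        by blast
    qed
  qed
  then have "E \<subseteq> sym_diff E U \<union> Z"
    by blast
  then show ?thesis
    using meager_in_Un[OF U(2) Z(1)] by (rule meager_in_subset[rotated])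
qed

section \<open>Summing a sequence of witnesses\<close>

lemma dist_le_geometric_tail:
  fixes x :: "nat \<Rightarrow> 'a::metric_space"
  assumes step: "\<And>m. dist (x (Suc m)) (x m) \<le> (1/2)^m" and "m \<le> n"
  shows "dist (x m) (x n) \<le> 2 * (1/2)^m"
proof -
  have bound: "dist (x m) (x (m + k)) \<le> 2 * (1/2)^m - 2 * (1/2)^(m + k)" for k
  proof (induction k)
    case (Suc k)
    have "dist (x m) (x (m + Suc k)) \<le> dist (x m) (x (m + k)) + dist (x (Suc (m + k))) (x (m + k))"
      by (simp add: dist_triangle dist_commute)
    also have "\<dots> \<le> 2 * (1/2)^m - 2 * (1/2)^(m + Suc k)"
      using Suc step[of "m + k"] by simp
    finally show ?case .
  qed simp
  obtain k where n: "n = m + k"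
    using \<open>m \<le> n\<close> le_Suc_ex by blast
  have "0 \<le> (1/2::real)^(m + k)"
    by simp
  then show ?thesis
    unfolding n using bound[of k] by linarith
qed

lemma eventually_geometric_less:
  assumes "e > 0"
  shows "eventually (\<lambda>m. 2 * (1/2::real)^m < e) sequentially"
proof -
  have "(\<lambda>m. 2 * (1/2::real)^m) \<longlonglongrightarrow> 0"
    by (rule tendsto_mult_right_zero) (rule LIMSEQ_realpow_zero; simp)
  then show ?thesis
    using assms by (rule order_tendstoD(2))
qed

lemma geometric_Cauchy:
  fixes x :: "nat \<Rightarrow> 'a::metric_space"
  assumes "\<And>m. dist (x (Suc m)) (x m) \<le> (1/2)^m"
  shows "Cauchy x"
  unfolding Cauchy_altdef2
proof (intro allI impI)
  fix e :: real assume "e > 0"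
  then obtain M where M: "\<And>m. m \<ge> M \<Longrightarrow> 2 * (1/2::real)^m < e"
    using eventually_geometric_less unfolding eventually_sequentially by blast
  have "dist (x n) (x M) < e" if "n \<ge> M" for n
    using dist_le_geometric_tail[OF assms that] M[of M] by (simp add: dist_commute)
  then show "\<exists>N. \<forall>n\<ge>N. dist (x n) (x N) < e"
    by blast
qed

lemma dist_limit_le_geometric_tail:
  fixes x :: "nat \<Rightarrow> 'a::metric_space"
  assumes "\<And>m. dist (x (Suc m)) (x m) \<le> (1/2)^m" "x \<longlonglongrightarrow> l"
  shows "dist (x m) l \<le> 2 * (1/2)^m"
proof (rule LIMSEQ_le_const2)
  show "(\<lambda>n. dist (x m) (x n)) \<longlonglongrightarrow> dist (x m) l"
    using assms(2) by (intro tendsto_intros)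
  show "\<exists>N. \<forall>n\<ge>N. dist (x m) (x n) \<le> 2 * (1/2)^m"
    using dist_le_geometric_tail[OF assms(1)] by blast
qed

text \<open>reachable_sums Bs n collects all partial sums of the first n chosen witnesses, and the witness
  chosen at step n moves each of them by less than 2^-n. This makes the series converge in any
  complete metric, which need not be invariant.\<close>

definition chosen_witness ::
    "(nat \<Rightarrow> 'g::{metric_space, topological_group_add} set) \<Rightarrow> nat \<Rightarrow> 'g set \<Rightarrow>
     (nat \<Rightarrow> real) set \<times> ((nat \<Rightarrow> real) \<Rightarrow> 'g)" where
  "chosen_witness Bs n C = (SOME p. haar_meager_witness (Bs n) (fst p) (snd p) \<and>
     (\<forall>a\<in>C. \<forall>x\<in>fst p. dist (a + snd p x) a < (1/2)^n))"

primrec reachable_sums :: "(nat \<Rightarrow> 'g::{metric_space, topological_group_add} set) \<Rightarrow> nat \<Rightarrow> 'g set"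
  where
    "reachable_sums Bs 0 = {0}"
  | "reachable_sums Bs (Suc n) =
      (\<lambda>(a, x). a + snd (chosen_witness Bs n (reachable_sums Bs n)) x) `
        (reachable_sums Bs n \<times> fst (chosen_witness Bs n (reachable_sums Bs n)))"

definition witness_domain ::
    "(nat \<Rightarrow> 'g::{metric_space, topological_group_add} set) \<Rightarrow> nat \<Rightarrow> (nat \<Rightarrow> real) set"
  where "witness_domain Bs n = fst (chosen_witness Bs n (reachable_sums Bs n))"

definition witness_map ::
    "(nat \<Rightarrow> 'g::{metric_space, topological_group_add} set) \<Rightarrow> nat \<Rightarrow> (nat \<Rightarrow> real) \<Rightarrow> 'g"
  where "witness_map Bs n = snd (chosen_witness Bs n (reachable_sums Bs n))"

primrec partial_sum ::
    "(nat \<Rightarrow> 'g::{metric_space, topological_group_add} set) \<Rightarrow> nat \<Rightarrow> (nat \<Rightarrow> real) \<Rightarrow> 'g"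
  where
    "partial_sum Bs 0 y = 0"
  | "partial_sum Bs (Suc m) y = partial_sum Bs m y + witness_map Bs m (block m y)"

definition sum_map :: "(nat \<Rightarrow> 'g::{metric_space, topological_group_add} set) \<Rightarrow> (nat \<Rightarrow> real) \<Rightarrow> 'g"
  where "sum_map Bs y = lim (\<lambda>m. partial_sum Bs m y)"

context
  fixes Bs :: "nat \<Rightarrow> 'g::{complete_space, topological_group_add} set"
  assumes witness: "\<And>n. \<exists>K f. haar_meager_witness (Bs n) K f"
begin

lemma chosen_witness:
  assumes "compact C"
  shows "haar_meager_witness (Bs n) (fst (chosen_witness Bs n C)) (snd (chosen_witness Bs n C))"
    and "\<And>a x. a \<in> C \<Longrightarrow> x \<in> fst (chosen_witness Bs n C) \<Longrightarrow>
      dist (a + snd (chosen_witness Bs n C) x) a < (1/2)^n"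
proof -
  obtain K f where "haar_meager_witness (Bs n) K f"
    using witness by blast
  moreover have "(0::real) < (1/2)^n"
    by simp
  ultimately obtain K' f' where "haar_meager_witness (Bs n) K' f'"
    "\<And>a x. a \<in> C \<Longrightarrow> x \<in> K' \<Longrightarrow> dist (a + f' x) a < (1/2)^n"
    using assms by (metis haar_meager_witness_small_displacement)
  then have "\<exists>p. haar_meager_witness (Bs n) (fst p) (snd p) \<and>
      (\<forall>a\<in>C. \<forall>x\<in>fst p. dist (a + snd p x) a < (1/2)^n)"
    by (intro exI[of _ "(K', f')"]) simp
  then have "haar_meager_witness (Bs n) (fst (chosen_witness Bs n C)) (snd (chosen_witness Bs n C)) \<and>
      (\<forall>a\<in>C. \<forall>x\<in>fst (chosen_witness Bs n C). dist (a + snd (chosen_witness Bs n C) x) a < (1/2)^n)"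
    unfolding chosen_witness_def by (rule someI_ex)
  then show "haar_meager_witness (Bs n) (fst (chosen_witness Bs n C)) (snd (chosen_witness Bs n C))"
    "\<And>a x. a \<in> C \<Longrightarrow> x \<in> fst (chosen_witness Bs n C) \<Longrightarrow>
      dist (a + snd (chosen_witness Bs n C) x) a < (1/2)^n"
    by blast+
qed

lemma compact_reachable_sums: "compact (reachable_sums Bs n)"
proof (induction n)
  case (Suc n)
  define W where "W = chosen_witness Bs n (reachable_sums Bs n)"
  have "compact (fst W)" "continuous_on (fst W) (snd W)"
    using chosen_witness(1)[OF Suc] unfolding W_def haar_meager_witness_def by auto
  then have "continuous_on (reachable_sums Bs n \<times> fst W) (\<lambda>p. fst p + snd W (snd p))"
    by (intro continuous_on_add continuous_on_fst continuous_on_id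
        continuous_on_compose2[OF _ continuous_on_snd[OF continuous_on_id]]) auto
  then have "compact ((\<lambda>p. fst p + snd W (snd p)) ` (reachable_sums Bs n \<times> fst W))"
    using compact_Times[OF Suc \<open>compact (fst W)\<close>] by (rule compact_continuous_image)
  then show ?case
    by (simp add: W_def case_prod_beta')
qed simp

lemma haar_meager_witness_domain: "haar_meager_witness (Bs n) (witness_domain Bs n) (witness_map Bs n)"
  unfolding witness_domain_def witness_map_def by (rule chosen_witness(1)[OF compact_reachable_sums])

lemma dist_witness_map:
  "a \<in> reachable_sums Bs n \<Longrightarrow> x \<in> witness_domain Bs n \<Longrightarrow>
    dist (a + witness_map Bs n x) a < (1/2)^n"
  unfolding witness_domain_def witness_map_def by (rule chosen_witness(2)[OF compact_reachable_sums])

lemma partial_sum_in_reachable_sums: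
  "y \<in> block_product (witness_domain Bs) \<Longrightarrow> partial_sum Bs m y \<in> reachable_sums Bs m"
proof (induction m)
  case (Suc m)
  then have "(partial_sum Bs m y, block m y) \<in> reachable_sums Bs m \<times> witness_domain Bs m"
    by (simp add: block_in_block_product)
  then have "partial_sum Bs m y + witness_map Bs m (block m y) \<in>
      (\<lambda>(a, x). a + witness_map Bs m x) ` (reachable_sums Bs m \<times> witness_domain Bs m)"
    by (rule rev_image_eqI) simp
  then show ?case
    by (simp add: witness_domain_def witness_map_def)
qed simp

lemma dist_partial_sum_Suc:
  assumes "y \<in> block_product (witness_domain Bs)"
  shows "dist (partial_sum Bs (Suc m) y) (partial_sum Bs m y) \<le> (1/2)^m"
proof (rule less_imp_le)
  show "dist (partial_sum Bs (Suc m) y) (partial_sum Bs m y) < (1/2)^m"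
    using dist_witness_map[OF partial_sum_in_reachable_sums[OF assms] block_in_block_product[OF assms]]
    by simp
qed

lemma partial_sum_tendsto_sum_map:
  assumes "y \<in> block_product (witness_domain Bs)"
  shows "(\<lambda>m. partial_sum Bs m y) \<longlonglongrightarrow> sum_map Bs y"
proof -
  have "Cauchy (\<lambda>m. partial_sum Bs m y)"
    using dist_partial_sum_Suc[OF assms] by (rule geometric_Cauchy)
  then show ?thesis
    unfolding sum_map_def using Cauchy_convergent convergent_LIMSEQ_iff by blast
qed

lemma dist_partial_sum_sum_map:
  "y \<in> block_product (witness_domain Bs) \<Longrightarrow> dist (partial_sum Bs m y) (sum_map Bs y) \<le> 2 * (1/2)^m"
  by (rule dist_limit_le_geometric_tail[OF dist_partial_sum_Suc partial_sum_tendsto_sum_map])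

lemma continuous_on_partial_sum: "continuous_on (block_product (witness_domain Bs)) (partial_sum Bs m)"
proof (induction m)
  case (Suc m)
  have "continuous_on (block_product (witness_domain Bs)) (\<lambda>y. witness_map Bs m (block m y))"
    using haar_meager_witness_domain[of m] unfolding haar_meager_witness_def
    by (intro continuous_on_compose2[OF _ continuous_on_block]) (auto intro: block_in_block_product)
  then show ?case
    using Suc by (simp add: continuous_on_add)
qed simp

lemma continuous_on_sum_map: "continuous_on (block_product (witness_domain Bs)) (sum_map Bs)"
proof (rule uniform_limit_theorem)
  show "\<forall>\<^sub>F m in sequentially. continuous_on (block_product (witness_domain Bs)) (partial_sum Bs m)"
    by (simp add: continuous_on_partial_sum)
  show "uniform_limit (block_product (witness_domain Bs)) (partial_sum Bs) (sum_map Bs) sequentially"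
  proof (rule uniform_limitI)
    fix e :: real assume "e > 0"
    show "\<forall>\<^sub>F m in sequentially. \<forall>y\<in>block_product (witness_domain Bs).
        dist (partial_sum Bs m y) (sum_map Bs y) < e"
      using eventually_geometric_less[OF \<open>e > 0\<close>]
      by eventually_elim (blast intro: le_less_trans[OF dist_partial_sum_sum_map])
  qed
qed simp

lemma partial_sum_block_update_le:
  "m \<le> n \<Longrightarrow> partial_sum Bs m (block_update n y z) = partial_sum Bs m y"
  by (induction m) auto

lemma partial_sum_block_update_gt:
  "partial_sum Bs (k + Suc n) (block_update n y z) =
    partial_sum Bs n y + witness_map Bs n z + (- partial_sum Bs (Suc n) y + partial_sum Bs (k + Suc n) y)"
proof (induction k)
  case 0
  show ?case
    using partial_sum_block_update_le[of n n y z] by (simp add: add.assoc)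
next
  case (Suc k)
  then show ?case
    by (simp add: add.assoc)
qed

lemma sum_map_block_update:
  assumes y: "y \<in> block_product (witness_domain Bs)" and z: "z \<in> witness_domain Bs n"
  shows "sum_map Bs (block_update n y z) =
    partial_sum Bs n y + witness_map Bs n z + (- partial_sum Bs (Suc n) y + sum_map Bs y)"
proof (rule LIMSEQ_unique)
  show "(\<lambda>k. partial_sum Bs (k + Suc n) (block_update n y z)) \<longlonglongrightarrow> sum_map Bs (block_update n y z)"
    using partial_sum_tendsto_sum_map[OF block_update_in_block_product[OF y z]]
    by (rule LIMSEQ_ignore_initial_segment)
  have "(\<lambda>k. partial_sum Bs (k + Suc n) y) \<longlonglongrightarrow> sum_map Bs y"
    using partial_sum_tendsto_sum_map[OF y] by (rule LIMSEQ_ignore_initial_segment)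
  then show "(\<lambda>k. partial_sum Bs (k + Suc n) (block_update n y z)) \<longlonglongrightarrow>
      partial_sum Bs n y + witness_map Bs n z + (- partial_sum Bs (Suc n) y + sum_map Bs y)"
    unfolding partial_sum_block_update_gt by (intro tendsto_intros)
qed

lemma meager_sum_map_preimage:
  assumes "Bs n \<in> sets borel"
  shows "meager_in (top_of_set (block_product (witness_domain Bs)))
    {y \<in> block_product (witness_domain Bs). sum_map Bs y \<in> (\<lambda>b. g + b + h) ` Bs n}"
    (is "meager_in (top_of_set ?K) ?E")
proof (rule Kuratowski_Ulam_block_product)
  show "compact (witness_domain Bs n)"
    using haar_meager_witness_domain unfolding haar_meager_witness_def by blast
  have "continuous_on ?K (\<lambda>y. -g + sum_map Bs y + -h)"
    by (intro continuous_intros continuous_on_sum_map)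
  then have "baire_property_in (top_of_set ?K) {y \<in> ?K. -g + sum_map Bs y + -h \<in> Bs n}"
    using assms by (rule baire_property_in_vimage_borel)
  then show "baire_property_in (top_of_set ?K) ?E"
    by (simp add: mem_translate_image_iff)
  fix y assume y: "y \<in> ?K"
  define P where "P = partial_sum Bs n y"
  define T where "T = - partial_sum Bs (Suc n) y + sum_map Bs y"
  \<comment> \<open>Along the n-th block, sum_map is a two-sided translate of witness_map Bs n.\<close>
  have "block_update n y z \<in> ?E \<longleftrightarrow>
      witness_map Bs n z \<in> (\<lambda>b. (-P + g) + b + (h + -T)) ` Bs n"
    if z: "z \<in> witness_domain Bs n" for z
  proof -
    have "block_update n y z \<in> ?E \<longleftrightarrow>
        P + witness_map Bs n z + T \<in> (\<lambda>b. g + b + h) ` Bs n"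
      using sum_map_block_update[OF y z] block_update_in_block_product[OF y z]
      unfolding P_def T_def by simp
    also have "\<dots> \<longleftrightarrow> witness_map Bs n z \<in> (\<lambda>b. (-P + g) + b + (h + -T)) ` Bs n"
      by (rule mem_translate_image_middle_iff)
    finally show ?thesis .
  qed
  then have "{z \<in> witness_domain Bs n. block_update n y z \<in> ?E} =
      {z \<in> witness_domain Bs n. witness_map Bs n z \<in> (\<lambda>b. (-P + g) + b + (h + -T)) ` Bs n}"
    by blast
  then show "meager_in (top_of_set (witness_domain Bs n))
      {z \<in> witness_domain Bs n. block_update n y z \<in> ?E}"
    using haar_meager_witness_domain unfolding haar_meager_witness_def by simp
qed

end

lemma haar_meager_UN:
  fixes A :: "nat \<Rightarrow> 'g::{polish_space, topological_group_add} set"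
  assumes "\<And>n. haar_meager (A n)"
  shows "haar_meager (\<Union>n. A n)"
proof -
  obtain Bs where Bs: "\<And>n. Bs n \<in> sets borel" "\<And>n. A n \<subseteq> Bs n"
    "\<And>n. \<exists>K f. haar_meager_witness (Bs n) K f"
    using assms unfolding haar_meager_iff_witness by metis
  let ?K = "block_product (witness_domain Bs)"
  have "haar_meager_witness (\<Union>n. Bs n) ?K (sum_map Bs)"
    unfolding haar_meager_witness_def
  proof (intro conjI allI)
    show "compact ?K" "?K \<noteq> {}"
      using haar_meager_witness_domain[where Bs = Bs, OF Bs(3)] unfolding haar_meager_witness_def
      by (simp_all add: compact_block_product block_product_nonempty)
    show "continuous_on ?K (sum_map Bs)"
      using Bs(3) by (rule continuous_on_sum_map[where Bs = Bs])
    fix g h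
    have "{y \<in> ?K. sum_map Bs y \<in> (\<lambda>b. g + b + h) ` (\<Union>n. Bs n)} =
        (\<Union>n. {y \<in> ?K. sum_map Bs y \<in> (\<lambda>b. g + b + h) ` Bs n})"
      by blast
    then show "meager_in (top_of_set ?K) {y \<in> ?K. sum_map Bs y \<in> (\<lambda>b. g + b + h) ` (\<Union>n. Bs n)}"
      using meager_sum_map_preimage[where Bs = Bs, OF Bs(3,1)] by (simp add: meager_in_UN)
  qed
  then show ?thesis
    unfolding haar_meager_iff_witness using Bs(1,2) by blast
qed

lemma haar_meager_subset: "haar_meager A \<Longrightarrow> C \<subseteq> A \<Longrightarrow> haar_meager C"
  unfolding haar_meager_def by (meson order_trans)

theorem theorem2p2:
  fixes A :: "'g::{polish_space, topological_group_add} set"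
    and \<A> :: "nat \<Rightarrow> 'g set"
  shows "(haar_meager A \<longrightarrow> (\<forall>C. C \<subseteq> A \<longrightarrow> haar_meager C))
       \<and> ((\<forall>n. haar_meager (\<A> n)) \<longrightarrow> haar_meager (\<Union>n. \<A> n))"
  using haar_meager_subset haar_meager_UN by blast

end
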